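(* Let $n\ge1$ and let $X_1,\dots,X_n,Y_1,\dots,Y_n$ be algebraically independent indeterminates. Then $$\det_{1\le i,j\le n}\left(X_i^j-Y_i^j\right)=\sum_{\sigma\in S_n}\operatorname{sgn}(\sigma)\prod_{1\le i\le j\le n}\left(X_{\sigma(j)}-Y_{\sigma(i)}\right).$$ *)

theory Defs
  imports "Jordan_Normal_Form.Determinant"
begin

end

theory Submission
  imports Defs "HOL-Computational_Algebra.Polynomial"
begin

text \<open>
  Both sides satisfy the same recursion in \<open>n\<close>. Let
  \<open>P(t) = \<Prod>\<^sub>b (t - y\<^sub>b) = t^(n+1) + \<Sum>\<^sub>k\<^sub>\<le>\<^sub>n c\<^sub>k t^k\<close>. Row \<open>a\<close> of the matrix holds the
  values \<open>x\<^sub>a^j - y\<^sub>a^j\<close> and \<open>P(y\<^sub>a) = 0\<close>, so adding the \<open>c\<^sub>k\<close>-combination of the other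
  columns to the last one turns it into \<open>P(x\<^sub>a) = \<Prod>\<^sub>b (x\<^sub>a - y\<^sub>b)\<close>; Laplace expansion
  along it expresses the determinant through determinants of size \<open>n\<close> with \<open>x\<^sub>a, y\<^sub>a\<close>
  removed. On the right, grouping the permutations by \<open>a = \<sigma>(n)\<close> splits off the same
  factor \<open>\<Prod>\<^sub>b (x\<^sub>a - y\<^sub>b)\<close> from the row \<open>j = n\<close> of the product, with the same sign.
\<close>

lemma degree_coeff_prod_monic_linear:
  fixes y :: "'b \<Rightarrow> 'a::comm_ring_1"
  assumes "finite S"
  shows "degree (\<Prod>b\<in>S. [:-y b, 1:]) \<le> card S \<and> coeff (\<Prod>b\<in>S. [:-y b, 1:]) (card S) = 1"
  using assms
proof (induction S rule: finite_induct)
  case empty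
  then show ?case by simp
next
  case (insert a S)
  let ?p = "\<Prod>b\<in>S. [:-y b, 1:]"
  have split: "(\<Prod>b\<in>insert a S. [:-y b, 1:]) = smult (-y a) ?p + pCons 0 ?p"
    using insert by (simp add: mult_pCons_left)
  have "degree (smult (-y a) ?p + pCons 0 ?p) \<le> Suc (card S)"
    using degree_smult_le[of "-y a" ?p] degree_pCons_le[of 0 ?p] insert.IH
    by (intro degree_add_le) linarith+
  moreover have "coeff ?p (Suc (card S)) = 0"
    using insert.IH by (simp add: coeff_eq_0)
  ultimately show ?case
    using split insert by simp
qed

lemma prod_diff_monic_expansion:
  fixes y :: "nat \<Rightarrow> 'a::comm_ring_1"
  obtains c where "\<And>t. (\<Prod>b<m. t - y b) = t ^ m + (\<Sum>k<m. c k * t ^ k)"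
proof
  define P where "P = (\<Prod>b<m. [:-y b, 1:])"
  have P: "degree P \<le> m" "coeff P m = 1"
    using degree_coeff_prod_monic_linear[of "{..<m}" y] by (simp_all add: P_def)
  fix t
  have "(\<Prod>b<m. t - y b) = poly P t"
    by (simp add: P_def poly_prod algebra_simps)
  also have "\<dots> = (\<Sum>k\<le>m. coeff P k * t ^ k)"
    unfolding poly_altdef
    by (rule sum.mono_neutral_left) (use P in \<open>auto simp: coeff_eq_0\<close>)
  also have "\<dots> = t ^ m + (\<Sum>k<m. coeff P k * t ^ k)"
    using P by (simp add: lessThan_Suc_atMost[symmetric])
  finally show "(\<Prod>b<m. t - y b) = t ^ m + (\<Sum>k<m. coeff P k * t ^ k)" .
qed

lemma prod_diff_eq_power_diff_combination:
  fixes x y :: "nat \<Rightarrow> 'a::comm_ring_1"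
  obtains c where "\<And>a. a < Suc n \<Longrightarrow> (\<Prod>b<Suc n. x a - y b) =
    (x a ^ Suc n - y a ^ Suc n) + (\<Sum>k<n. c k * (x a ^ Suc k - y a ^ Suc k))"
proof -
  obtain c where c: "\<And>t. (\<Prod>b<Suc n. t - y b) = t ^ Suc n + (\<Sum>k<Suc n. c k * t ^ k)"
    using prod_diff_monic_expansion by blast
  have "(\<Prod>b<Suc n. x a - y b) =
      (x a ^ Suc n - y a ^ Suc n) + (\<Sum>k<n. c (Suc k) * (x a ^ Suc k - y a ^ Suc k))"
    if a: "a < Suc n" for a
  proof -
    have "(\<Prod>b<Suc n. y a - y b) = 0"
      using a by (intro prod_zero) auto
    then have "(\<Prod>b<Suc n. x a - y b) = (\<Prod>b<Suc n. x a - y b) - (\<Prod>b<Suc n. y a - y b)"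
      by simp
    also have "\<dots> = (x a ^ Suc n - y a ^ Suc n) + (\<Sum>k<Suc n. c k * (x a ^ k - y a ^ k))"
      unfolding c by (simp add: sum_subtractf algebra_simps)
    also have "(\<Sum>k<Suc n. c k * (x a ^ k - y a ^ k)) = (\<Sum>k<n. c (Suc k) * (x a ^ Suc k - y a ^ Suc k))"
      unfolding sum.lessThan_Suc_shift by simp
    finally show ?thesis .
  qed
  then show thesis
    by (rule that)
qed

lemma det_add_combination_to_last_col:
  fixes A B :: "'a::comm_ring_1 mat"
  assumes A: "A \<in> carrier_mat (Suc n) (Suc n)" and B: "B \<in> carrier_mat (Suc n) (Suc n)"
    and other_cols: "\<And>i j. i < Suc n \<Longrightarrow> j < n \<Longrightarrow> B $$ (i, j) = A $$ (i, j)"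
    and last_col: "\<And>i. i < Suc n \<Longrightarrow> B $$ (i, n) = A $$ (i, n) + (\<Sum>k<n. c k * A $$ (i, k))"
  shows "det B = det A"
proof -
  define E :: "'a mat" where "E = mat (Suc n) (Suc n) (\<lambda>(k, j).
    if j = n then (if k = n then 1 else c k) else (if k = j then 1 else 0))"
  have E: "E \<in> carrier_mat (Suc n) (Suc n)"
    by (simp add: E_def)
  have "det E = 1"
  proof -
    have "upper_triangular E"
      by (auto simp: upper_triangular_def E_def)
    moreover have "diag_mat E = map (\<lambda>_. 1) [0..<Suc n]"
      unfolding diag_mat_def by (rule map_cong) (auto simp: E_def)
    ultimately show ?thesis
      using det_upper_triangular[OF _ E] by (simp add: map_replicate_const)
  qed
  moreover have "A * E = B"
  proof (rule eq_matI)
    fix i j assume "i < dim_row B" "j < dim_col B"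
    then have i: "i < Suc n" and j: "j < Suc n"
      using B by auto
    have "(A * E) $$ (i, j) = (\<Sum>k<Suc n. A $$ (i, k) * E $$ (k, j))"
      using i j A E by (simp add: scalar_prod_def atLeast0LessThan)
    also have "\<dots> = B $$ (i, j)"
    proof (cases "j = n")
      case True
      then show ?thesis
        using i by (simp add: last_col E_def algebra_simps)
    next
      case False
      then have "(\<Sum>k<Suc n. A $$ (i, k) * E $$ (k, j)) = (\<Sum>k<Suc n. if k = j then A $$ (i, k) else 0)"
        using j by (intro sum.cong) (auto simp: E_def)
      then show ?thesis
        using False i j by (simp add: other_cols)
    qed
    finally show "(A * E) $$ (i, j) = B $$ (i, j)" .
  qed (use A B E in auto)
  ultimately show ?thesis
    using det_mult[OF A E] by simp
qed

definition power_diff_mat :: "nat \<Rightarrow> (nat \<Rightarrow> 'a) \<Rightarrow> (nat \<Rightarrow> 'a) \<Rightarrow> 'a::comm_ring_1 mat" where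
  "power_diff_mat n x y = mat n n (\<lambda>(i, j). x i ^ (j + 1) - y i ^ (j + 1))"

definition perm_prod_diff_sum :: "nat \<Rightarrow> (nat \<Rightarrow> 'a) \<Rightarrow> (nat \<Rightarrow> 'a) \<Rightarrow> 'a::comm_ring_1" where
  "perm_prod_diff_sum n x y = (\<Sum>p | p permutes {0..<n}. signof p *
     (\<Prod>j\<in>{0..<n}. \<Prod>i\<in>{0..j}. (x (p j) - y (p i))))"

lemma det_power_diff_mat_Suc:
  fixes x y :: "nat \<Rightarrow> 'a::comm_ring_1"
  shows "det (power_diff_mat (Suc n) x y) = (\<Sum>a<Suc n. (\<Prod>b<Suc n. x a - y b) *
    ((-1) ^ (a + n) * det (power_diff_mat n (x \<circ> insert_index a) (y \<circ> insert_index a))))"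
proof -
  obtain c where c: "\<And>a. a < Suc n \<Longrightarrow> (\<Prod>b<Suc n. x a - y b) =
      (x a ^ Suc n - y a ^ Suc n) + (\<Sum>k<n. c k * (x a ^ Suc k - y a ^ Suc k))"
    using prod_diff_eq_power_diff_combination by blast
  define B where "B = mat (Suc n) (Suc n) (\<lambda>(i, j).
    if j = n then (\<Prod>b<Suc n. x i - y b) else x i ^ (j + 1) - y i ^ (j + 1))"
  have B: "B \<in> carrier_mat (Suc n) (Suc n)"
    by (simp add: B_def)
  have "det (power_diff_mat (Suc n) x y) = det B"
    by (rule det_add_combination_to_last_col[symmetric, where c = c])
      (auto simp: B_def power_diff_mat_def c simp del: prod.lessThan_Suc power_Suc)
  also have "\<dots> = (\<Sum>a<Suc n. B $$ (a, n) * cofactor B a n)"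
    by (rule laplace_expansion_column[OF B]) simp
  also have "\<dots> = (\<Sum>a<Suc n. (\<Prod>b<Suc n. x a - y b) *
    ((-1) ^ (a + n) * det (power_diff_mat n (x \<circ> insert_index a) (y \<circ> insert_index a))))"
  proof (rule sum.cong[OF refl])
    fix a assume a: "a \<in> {..<Suc n}"
    have "mat_delete B a n = power_diff_mat n (x \<circ> insert_index a) (y \<circ> insert_index a)"
      by (rule eq_matI) (auto simp: mat_delete_def B_def power_diff_mat_def insert_index_def)
    then show "B $$ (a, n) * cofactor B a n = (\<Prod>b<Suc n. x a - y b) *
      ((-1) ^ (a + n) * det (power_diff_mat n (x \<circ> insert_index a) (y \<circ> insert_index a)))"
      using a by (simp add: cofactor_def B_def)
  qed
  finally show ?thesis .
qed

lemma sum_permutes_Suc_by_last_value: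
  "(\<Sum>p | p permutes {0..<Suc n}. f p) =
    (\<Sum>a<Suc n. \<Sum>q | q permutes {0..<n}. f (permutation_insert n a q))"
proof -
  let ?N = "{0..<Suc n}"
  have "{p. p permutes ?N} = (\<Union>a\<in>?N. {p. p permutes ?N \<and> p n = a})"
    using permutes_in_image[of _ ?N n] by auto
  then have "(\<Sum>p | p permutes ?N. f p) = (\<Sum>a\<in>?N. \<Sum>p | p permutes ?N \<and> p n = a. f p)"
    by (simp only:) (rule sum.UNION_disjoint; use finite_permutations[of ?N] in auto)
  also have "\<dots> = (\<Sum>a<Suc n. \<Sum>q | q permutes {0..<n}. f (permutation_insert n a q))"
  proof (rule sum.cong)
    fix a assume "a \<in> {..<Suc n}"
    then have "(\<Sum>p | p permutes ?N \<and> p n = a. f p) =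
        sum f (permutation_insert n a ` {q. q permutes {0..<n}})"
      by (simp add: permutation_fix)
    also have "\<dots> = (\<Sum>q | q permutes {0..<n}. f (permutation_insert n a q))"
      using sum.reindex[OF permutation_insert_inj_on[of n n a]] \<open>a \<in> {..<Suc n}\<close> by simp
    finally show "(\<Sum>p | p permutes ?N \<and> p n = a. f p) =
        (\<Sum>q | q permutes {0..<n}. f (permutation_insert n a q))" .
  qed auto
  finally show ?thesis .
qed

lemma perm_prod_diff_sum_Suc:
  fixes x y :: "nat \<Rightarrow> 'a::comm_ring_1"
  shows "perm_prod_diff_sum (Suc n) x y = (\<Sum>a<Suc n. (\<Prod>b<Suc n. x a - y b) *
    ((-1) ^ (a + n) * perm_prod_diff_sum n (x \<circ> insert_index a) (y \<circ> insert_index a)))"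
proof -
  have term_split: "signof (permutation_insert n a q) *
      (\<Prod>j\<in>{0..<Suc n}. \<Prod>i\<in>{0..j}. x (permutation_insert n a q j) - y (permutation_insert n a q i)) =
      (\<Prod>b<Suc n. x a - y b) * ((-1) ^ (a + n) * (signof q *
        (\<Prod>j\<in>{0..<n}. \<Prod>i\<in>{0..j}. (x \<circ> insert_index a) (q j) - (y \<circ> insert_index a) (q i))))"
    if q: "q permutes {0..<n}" and a: "a < Suc n" for q a
  proof -
    define p where "p = permutation_insert n a q"
    have p_perm: "p permutes {0..<Suc n}"
      using permutation_insert_permutes[OF q] a by (simp add: p_def)
    have "(\<Prod>i\<in>{0..n}. x (p n) - y (p i)) = (\<Prod>i\<in>{0..<Suc n}. ((\<lambda>b. x a - y b) \<circ> p) i)"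
      by (simp add: p_def atLeastLessThanSuc_atLeastAtMost)
    also have "\<dots> = (\<Prod>b\<in>{0..<Suc n}. x a - y b)"
      by (rule prod.permute[OF p_perm, symmetric])
    also have "\<dots> = (\<Prod>b<Suc n. x a - y b)"
      by (simp add: atLeast0LessThan)
    finally have last_row: "(\<Prod>i\<in>{0..n}. x (p n) - y (p i)) = (\<Prod>b<Suc n. x a - y b)" .
    have "p i = insert_index a (q i)" if "i < n" for i
      using that by (simp add: p_def permutation_insert_def insert_dom_def insert_ran_def)
    then have other_rows: "(\<Prod>j\<in>{0..<n}. \<Prod>i\<in>{0..j}. x (p j) - y (p i)) =
        (\<Prod>j\<in>{0..<n}. \<Prod>i\<in>{0..j}. (x \<circ> insert_index a) (q j) - (y \<circ> insert_index a) (q i))"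
      by (intro prod.cong refl) auto
    have "signof p = (-1::'a) ^ (a + n) * signof q"
      using signof_permutation_insert[OF q, of n a] a by (simp add: p_def add.commute)
    then show ?thesis
      unfolding p_def[symmetric]
      by (simp add: prod.atLeast0_lessThan_Suc last_row other_rows mult_ac)
  qed
  show ?thesis
    unfolding perm_prod_diff_sum_def sum_permutes_Suc_by_last_value sum_distrib_left
    by (intro sum.cong refl term_split) auto
qed

lemma det_power_diff_mat_eq_perm_prod_diff_sum:
  "det (power_diff_mat n x y) = perm_prod_diff_sum n x y"
proof (induction n arbitrary: x y)
  case 0
  have "{p. p permutes {0..<0::nat}} = {id}"
    by auto
  then show ?case
    by (simp add: perm_prod_diff_sum_def power_diff_mat_def)
next
  case (Suc n)
  then show ?case
    by (simp add: det_power_diff_mat_Suc perm_prod_diff_sum_Suc comp_def)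
qed

theorem mainTheorem10:
  fixes n :: nat and x y :: "nat \<Rightarrow> 'a :: comm_ring_1"
  assumes "n \<ge> 1"
  shows "det (mat n n (\<lambda>(i, j). x i ^ (j + 1) - y i ^ (j + 1))) =
    (\<Sum>p | p permutes {0..<n}. signof p *
       (\<Prod>j\<in>{0..<n}. \<Prod>i\<in>{0..j}. (x (p j) - y (p i))))"
  using det_power_diff_mat_eq_perm_prod_diff_sum[of n x y]
  unfolding power_diff_mat_def perm_prod_diff_sum_def .

end
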